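(* Let $n\geq 3$, $m\geq 2$ and $k\geq 1$. The group $B_n/[B_n[m], B_n[m]](mk+1)$ is finite and isomorphic to the cyclic group $\mathbb{Z}_{mk+1}$.
   Context: $B_n$ is the braid group on $n$ strands with standard generators $\sigma_1,\dots,\sigma_{n-1}$. For $m\ge 2$, the level $m$ congruence subgroup $B_n[m]$ is the kernel of the mod $m$ reduction $\rho_m$ of the symplectic representation of $B_n$ obtained by specializing the (reducible) Burau representation at $t=-1$. $[B_n[m],B_n[m]]$ denotes its commutator subgroup. For positive integers $n,m,p$, $B_n/[B_n[m], B_n[m]](p)$ denotes the Coxeter-type quotient of $B_n/[B_n[m], B_n[m]]$ obtained by adding the relations $\sigma_i^p=1$ for all $1\le i\le n-1$, i.e. the quotient of $B_n$ by the normal subgroup generated by $[B_n[m],B_n[m]]$ and $\sigma_1^p$. *)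

theory Defs
  imports "HOL-Algebra.Algebra" "HOL-Number_Theory.Cong"
begin

text \<open>Braid words: a letter (i, b) stands for sigma_i if b = False and for
  sigma_i inverse if b = True.  Valid letters for B_n have 1 <= i <= n-1.\<close>

type_synonym bword = "(nat \<times> bool) list"

definition valid_bword :: "nat \<Rightarrow> bword \<Rightarrow> bool" where
  "valid_bword n w \<longleftrightarrow> (\<forall>x \<in> set w. 1 \<le> fst x \<and> fst x \<le> n - 1)"

definition inv_bword :: "bword \<Rightarrow> bword" where
  "inv_bword w = rev (map (\<lambda>(i, b). (i, \<not> b)) w)"

definition comm_bword :: "bword \<Rightarrow> bword \<Rightarrow> bword" where
  "comm_bword u v = u @ v @ inv_bword u @ inv_bword v"

text \<open>n x n integer matrices as functions (indices 0..n-1).  Unreduced (reducible)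
  Burau representation at t = -1: sigma_i acts by the block [[1-t, t],[1, 0]] =
  [[2,-1],[1,0]] in rows/columns i-1, i (0-based); its inverse is [[0,1],[-1,2]].\<close>

definition burau_gen :: "nat \<Rightarrow> bool \<Rightarrow> nat \<Rightarrow> nat \<Rightarrow> int" where
  "burau_gen i b r c =
     (if r = i - 1 \<and> c = i - 1 then (if b then 0 else 2)
      else if r = i - 1 \<and> c = i then (if b then 1 else -1)
      else if r = i \<and> c = i - 1 then (if b then -1 else 1)
      else if r = i \<and> c = i then (if b then 2 else 0)
      else if r = c then 1 else 0)"

definition mat_id :: "nat \<Rightarrow> nat \<Rightarrow> int" where
  "mat_id r c = (if r = c then 1 else 0)"

definition mat_mult :: "nat \<Rightarrow> (nat \<Rightarrow> nat \<Rightarrow> int) \<Rightarrow> (nat \<Rightarrow> nat \<Rightarrow> int) \<Rightarrow> nat \<Rightarrow> nat \<Rightarrow> int" where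
  "mat_mult n A B r c = (\<Sum>j<n. A r j * B j c)"

definition burau_word :: "nat \<Rightarrow> bword \<Rightarrow> nat \<Rightarrow> nat \<Rightarrow> int" where
  "burau_word n w = foldr (\<lambda>(i, b) M. mat_mult n (burau_gen i b) M) w mat_id"

text \<open>A word represents an element of the level m congruence subgroup B_n[m]
  iff its Burau matrix at t = -1 is congruent to the identity mod m.\<close>

definition in_level_kernel :: "nat \<Rightarrow> nat \<Rightarrow> bword \<Rightarrow> bool" where
  "in_level_kernel n m w \<longleftrightarrow>
     (\<forall>r < n. \<forall>c < n. [burau_word n w r c = mat_id r c] (mod int m))"

text \<open>The congruence on valid words whose classes are the elements of
  B_n / <<[B_n[m],B_n[m]], sigma_1^p>>: free reduction, braid relations,
  commutators of congruence-subgroup elements, and sigma_1^p.\<close>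

inductive braid_rel :: "nat \<Rightarrow> nat \<Rightarrow> nat \<Rightarrow> bword \<Rightarrow> bword \<Rightarrow> bool"
  for n m p where
  refl: "valid_bword n w \<Longrightarrow> braid_rel n m p w w"
| sym: "braid_rel n m p u v \<Longrightarrow> braid_rel n m p v u"
| trans: "braid_rel n m p u v \<Longrightarrow> braid_rel n m p v w \<Longrightarrow> braid_rel n m p u w"
| ctx: "braid_rel n m p u v \<Longrightarrow> valid_bword n a \<Longrightarrow> valid_bword n b \<Longrightarrow>
        braid_rel n m p (a @ u @ b) (a @ v @ b)"
| cancel: "1 \<le> i \<Longrightarrow> i \<le> n - 1 \<Longrightarrow> braid_rel n m p [(i, b), (i, \<not> b)] []"
| braid3: "1 \<le> i \<Longrightarrow> i + 1 \<le> n - 1 \<Longrightarrow>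
        braid_rel n m p [(i, False), (i + 1, False), (i, False)]
                        [(i + 1, False), (i, False), (i + 1, False)]"
| far: "1 \<le> i \<Longrightarrow> i + 2 \<le> j \<Longrightarrow> j \<le> n - 1 \<Longrightarrow>
        braid_rel n m p [(i, False), (j, False)] [(j, False), (i, False)]"
| comm: "valid_bword n u \<Longrightarrow> valid_bword n v \<Longrightarrow> in_level_kernel n m u \<Longrightarrow>
         in_level_kernel n m v \<Longrightarrow> braid_rel n m p (comm_bword u v) []"
| power: "1 \<le> n - 1 \<Longrightarrow> braid_rel n m p (replicate p (1, False)) []"

definition braid_quot_group :: "nat \<Rightarrow> nat \<Rightarrow> nat \<Rightarrow> bword set monoid" where
  "braid_quot_group n m p =
     \<lparr> carrier = {w. valid_bword n w} // {(u, v). braid_rel n m p u v},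
       monoid.mult = (\<lambda>A B. {w. \<exists>a \<in> A. \<exists>b \<in> B. braid_rel n m p (a @ b) w}),
       one = {w. braid_rel n m p [] w} \<rparr>"

end

theory Submission
  imports Defs
begin

(* The Burau matrix of sigma_i at t = -1 differs from the identity by a square-zero matrix N,
   so sigma_i^m maps to I + m N and lies in B_n[m]. Modulo [B_n[m], B_n[m]] the powers sigma_i^m
   therefore commute pairwise, and so do the sigma_i^(mk), which are the inverses of the sigma_i
   once sigma_1^(mk+1) = 1 (all sigma_i are conjugate to sigma_1). Two commuting generators
   satisfying the braid relation are equal, so the quotient is cyclic, generated by sigma_1 of
   order dividing mk+1; the exponent sum modulo mk+1 is an invariant, so the order is exactly mk+1. *)

lemma valid_bword_Nil [simp]: "valid_bword n []"
  by (simp add: valid_bword_def)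

lemma valid_bword_Cons [simp]:
  "valid_bword n (x # w) \<longleftrightarrow> 1 \<le> fst x \<and> fst x \<le> n - 1 \<and> valid_bword n w"
  by (auto simp: valid_bword_def)

lemma valid_bword_append [simp]:
  "valid_bword n (u @ v) \<longleftrightarrow> valid_bword n u \<and> valid_bword n v"
  by (auto simp: valid_bword_def)

lemma valid_bword_replicate [simp]:
  "valid_bword n (replicate j x) \<longleftrightarrow> j = 0 \<or> 1 \<le> fst x \<and> fst x \<le> n - 1"
  by (auto simp: valid_bword_def)

lemma valid_bword_inv_bword [simp]: "valid_bword n (inv_bword w) \<longleftrightarrow> valid_bword n w"
  by (auto simp: valid_bword_def inv_bword_def)

lemma inv_bword_Nil [simp]: "inv_bword [] = []"
  by (simp add: inv_bword_def)

lemma inv_bword_Cons [simp]: "inv_bword ((i, b) # w) = inv_bword w @ [(i, \<not> b)]"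
  by (simp add: inv_bword_def)

lemma inv_bword_append [simp]: "inv_bword (u @ v) = inv_bword v @ inv_bword u"
  by (simp add: inv_bword_def)

lemma inv_bword_inv_bword [simp]: "inv_bword (inv_bword w) = w"
  by (simp add: inv_bword_def rev_map comp_def case_prod_beta)

definition exponent_sum :: "bword \<Rightarrow> int" where
  "exponent_sum w = (\<Sum>x\<leftarrow>w. if snd x then -1 else 1)"

lemma exponent_sum_Nil [simp]: "exponent_sum [] = 0"
  and exponent_sum_Cons [simp]: "exponent_sum (x # w) = (if snd x then -1 else 1) + exponent_sum w"
  and exponent_sum_append [simp]: "exponent_sum (u @ v) = exponent_sum u + exponent_sum v"
  by (simp_all add: exponent_sum_def)

lemma exponent_sum_inv_bword [simp]: "exponent_sum (inv_bword w) = - exponent_sum w"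
  by (induction w) auto

lemma exponent_sum_replicate [simp]: "exponent_sum (replicate j (i, False)) = int j"
  by (induction j) auto

definition sigma_one_power :: "nat \<Rightarrow> bword" where
  "sigma_one_power j = replicate j (1, False)"

lemma sigma_one_power_0 [simp]: "sigma_one_power 0 = []"
  by (simp add: sigma_one_power_def)

lemma sigma_one_power_add: "sigma_one_power (a + b) = sigma_one_power a @ sigma_one_power b"
  by (simp add: sigma_one_power_def replicate_add)

lemma exponent_sum_sigma_one_power [simp]: "exponent_sum (sigma_one_power j) = int j"
  by (simp add: sigma_one_power_def)

lemma mat_mult_mat_id_left: "a < n \<Longrightarrow> mat_mult n mat_id M a c = M a c"
  by (simp add: mat_mult_def mat_id_def if_distrib[where f = "\<lambda>x. x * _"] cong: if_cong)

lemma mat_mult_burau_gen: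
  assumes "1 \<le> i" "i < n" "r < n"
  shows "mat_mult n (burau_gen i False) M r c =
    (if r = i - 1 then 2 * M (i - 1) c - M i c else if r = i then M (i - 1) c else M r c)"
proof -
  have row: "burau_gen i False r x =
      (if r = i - 1 then 2 * mat_id (i - 1) x - mat_id i x
       else if r = i then mat_id (i - 1) x else mat_id r x)" for x
    using assms(1) by (auto simp: burau_gen_def mat_id_def)
  have "mat_mult n (burau_gen i False) M r c =
      (if r = i - 1 then 2 * mat_mult n mat_id M (i - 1) c - mat_mult n mat_id M i c
       else if r = i then mat_mult n mat_id M (i - 1) c else mat_mult n mat_id M r c)"
    by (simp add: mat_mult_def row left_diff_distrib sum_subtractf sum_distrib_left mult.assoc)
  then show ?thesis
    using assms by (simp add: mat_mult_mat_id_left)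
qed

lemma burau_word_replicate:
  assumes "1 \<le> i" "i < n" "r < n" "c < n"
  shows "burau_word n (replicate j (i, False)) r c =
    mat_id r c + int j * (burau_gen i False r c - mat_id r c)"
  using assms(3)
proof (induction j arbitrary: r)
  case 0
  then show ?case by (simp add: burau_word_def)
next
  case (Suc j)
  have "burau_word n (replicate (Suc j) (i, False)) r c =
      mat_mult n (burau_gen i False) (burau_word n (replicate j (i, False))) r c"
    by (simp add: burau_word_def)
  also have "\<dots> = mat_id r c + int (Suc j) * (burau_gen i False r c - mat_id r c)"
    using assms Suc.prems
    by (simp add: mat_mult_burau_gen Suc.IH) (auto simp: burau_gen_def mat_id_def algebra_simps)
  finally show ?case .
qed

lemma in_level_kernel_replicate:
  assumes "1 \<le> i" "i \<le> n - 1"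
  shows "in_level_kernel n m (replicate m (i, False))"
  using assms by (auto simp: in_level_kernel_def burau_word_replicate cong_iff_dvd_diff)

declare braid_rel.trans [trans]

locale braid_congruence =
  fixes n m p :: nat
begin

abbreviation braid_equiv :: "bword \<Rightarrow> bword \<Rightarrow> bool" (infix "\<doteq>" 50) where
  "u \<doteq> v \<equiv> braid_rel n m p u v"

lemma braid_rel_valid: "u \<doteq> v \<Longrightarrow> valid_bword n u \<and> valid_bword n v"
  by (induction rule: braid_rel.induct) (auto simp: comm_bword_def)

lemma braid_rel_append:
  assumes "u \<doteq> u'" and "v \<doteq> v'"
  shows "u @ v \<doteq> u' @ v'"
proof -
  have "u @ v \<doteq> u' @ v"
    using braid_rel.ctx[OF assms(1), of "[]" v] braid_rel_valid[OF assms(2)] by simp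
  also have "\<dots> \<doteq> u' @ v'"
    using braid_rel.ctx[OF assms(2), of u' "[]"] braid_rel_valid[OF assms(1)] by simp
  finally show ?thesis .
qed

lemma append_inv_bword_rel_Nil: "valid_bword n w \<Longrightarrow> w @ inv_bword w \<doteq> []"
proof (induction w)
  case Nil
  then show ?case by (auto intro: braid_rel.refl)
next
  case (Cons x w)
  obtain i b where x: "x = (i, b)" by fastforce
  have "x # w @ inv_bword (x # w) = [(i, b)] @ (w @ inv_bword w) @ [(i, \<not> b)]"
    by (simp add: x)
  also have "\<dots> \<doteq> [(i, b)] @ [] @ [(i, \<not> b)]"
    using Cons x by (intro braid_rel.ctx) auto
  also have "\<dots> \<doteq> []"
    using Cons.prems x by (auto intro: braid_rel.cancel)
  finally show ?case by simp
qed

lemma inv_bword_append_rel_Nil: "valid_bword n w \<Longrightarrow> inv_bword w @ w \<doteq> []"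
  using append_inv_bword_rel_Nil[of "inv_bword w"] by simp

lemma braid_rel_cancel_left:
  assumes "valid_bword n a" and "a @ u \<doteq> a @ v"
  shows "u \<doteq> v"
proof -
  have valid: "valid_bword n u" "valid_bword n v"
    using braid_rel_valid[OF assms(2)] by auto
  have "u = [] @ u" by simp
  also have "\<dots> \<doteq> (inv_bword a @ a) @ u"
    using assms valid by (intro braid_rel_append braid_rel.sym[OF inv_bword_append_rel_Nil] braid_rel.refl)
  also have "\<dots> = inv_bword a @ (a @ u)" by simp
  also have "\<dots> \<doteq> inv_bword a @ (a @ v)"
    using braid_rel_append[OF braid_rel.refl assms(2), of "inv_bword a"] assms(1) by simp
  also have "\<dots> = (inv_bword a @ a) @ v" by simp
  also have "\<dots> \<doteq> [] @ v"
    using assms valid by (intro braid_rel_append inv_bword_append_rel_Nil braid_rel.refl)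
  finally show ?thesis by simp
qed

lemma braid_rel_cancel_right:
  assumes "valid_bword n a" and "u @ a \<doteq> v @ a"
  shows "u \<doteq> v"
proof -
  have valid: "valid_bword n u" "valid_bword n v"
    using braid_rel_valid[OF assms(2)] by auto
  have "u = u @ []" by simp
  also have "\<dots> \<doteq> u @ (a @ inv_bword a)"
    using assms valid by (intro braid_rel_append braid_rel.sym[OF append_inv_bword_rel_Nil] braid_rel.refl)
  also have "\<dots> = (u @ a) @ inv_bword a" by simp
  also have "\<dots> \<doteq> (v @ a) @ inv_bword a"
    using braid_rel_append[OF assms(2) braid_rel.refl, of "inv_bword a"] assms(1) by simp
  also have "\<dots> = v @ (a @ inv_bword a)" by simp
  also have "\<dots> \<doteq> v @ []"
    using assms valid by (intro braid_rel_append append_inv_bword_rel_Nil braid_rel.refl)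
  finally show ?thesis by simp
qed

lemma append_rel_Nil_imp_rel_inv_bword:
  assumes "valid_bword n v" and "u @ v \<doteq> []"
  shows "u \<doteq> inv_bword v"
proof (rule braid_rel_cancel_right[OF assms(1)])
  show "u @ v \<doteq> inv_bword v @ v"
    using assms(2) braid_rel.sym[OF inv_bword_append_rel_Nil[OF assms(1)]] by (rule braid_rel.trans)
qed

lemma braid_rel_inv_bword:
  assumes "u \<doteq> v"
  shows "inv_bword u \<doteq> inv_bword v"
proof -
  have valid: "valid_bword n u" "valid_bword n v"
    using braid_rel_valid[OF assms] by auto
  have "inv_bword v @ u \<doteq> inv_bword v @ v"
    using valid by (intro braid_rel_append braid_rel.refl assms) simp
  also have "\<dots> \<doteq> []"
    using valid by (intro inv_bword_append_rel_Nil)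
  finally have "inv_bword v \<doteq> inv_bword u"
    using valid by (intro append_rel_Nil_imp_rel_inv_bword)
  then show ?thesis by (rule braid_rel.sym)
qed

lemma level_kernel_commute:
  assumes "valid_bword n u" "valid_bword n v" "in_level_kernel n m u" "in_level_kernel n m v"
  shows "u @ v \<doteq> v @ u"
proof -
  have "(u @ v) @ inv_bword (v @ u) \<doteq> []"
    using braid_rel.comm[OF assms] by (simp add: comm_bword_def)
  then have "u @ v \<doteq> inv_bword (inv_bword (v @ u))"
    using assms by (intro append_rel_Nil_imp_rel_inv_bword) simp_all
  then show ?thesis by simp
qed

lemma commute_concat_replicate:
  assumes "valid_bword n u" and "u @ w \<doteq> w @ u"
  shows "concat (replicate j u) @ w \<doteq> w @ concat (replicate j u)"
proof (induction j)
  case 0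
  then show ?case using braid_rel_valid[OF assms(2)] by (auto intro: braid_rel.refl)
next
  case (Suc j)
  let ?U = "concat (replicate j u)"
  have valid: "valid_bword n ?U" using assms(1) by (induction j) auto
  have "concat (replicate (Suc j) u) @ w = u @ (?U @ w) @ []" by simp
  also have "\<dots> \<doteq> u @ (w @ ?U) @ []"
    using assms(1) by (intro braid_rel.ctx Suc.IH) auto
  also have "\<dots> = [] @ (u @ w) @ ?U" by simp
  also have "\<dots> \<doteq> [] @ (w @ u) @ ?U"
    using valid by (intro braid_rel.ctx assms(2)) auto
  finally show ?case by simp
qed

lemma conjugate_replicate:
  assumes "c @ [x] \<doteq> [y] @ c"
  shows "c @ replicate j x \<doteq> replicate j y @ c"
proof (induction j)
  case 0
  then show ?case using braid_rel_valid[OF assms] by (auto intro: braid_rel.refl)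
next
  case (Suc j)
  have valid: "valid_bword n [x]" "valid_bword n [y]" using braid_rel_valid[OF assms] by auto
  have "c @ replicate (Suc j) x = [] @ (c @ [x]) @ replicate j x"
    by simp
  also have "\<dots> \<doteq> [] @ ([y] @ c) @ replicate j x"
    using valid by (intro braid_rel.ctx assms) auto
  also have "\<dots> = [y] @ (c @ replicate j x) @ []" by simp
  also have "\<dots> \<doteq> [y] @ (replicate j y @ c) @ []"
    using valid by (intro braid_rel.ctx Suc.IH) auto
  finally show ?case by simp
qed

lemma conjugate_rel_Nil:
  assumes "c @ [x] \<doteq> [y] @ c" and "replicate j x \<doteq> []"
  shows "replicate j y \<doteq> []"
proof -
  have valid: "valid_bword n c" using braid_rel_valid[OF assms(1)] by simp
  have "replicate j y @ c \<doteq> c @ replicate j x"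
    using conjugate_replicate[OF assms(1)] by (rule braid_rel.sym)
  also have "\<dots> \<doteq> c @ []"
    using braid_rel_append[OF braid_rel.refl[OF valid] assms(2)] .
  also have "\<dots> = [] @ c" by simp
  finally show ?thesis by (rule braid_rel_cancel_right[OF valid])
qed

lemma exponent_sum_cong: "u \<doteq> v \<Longrightarrow> [exponent_sum u = exponent_sum v] (mod int p)"
proof (induction rule: braid_rel.induct)
  case (sym u v)
  then show ?case by (simp add: cong_sym_eq)
next
  case (trans u v w)
  then show ?case by (metis cong_trans)
next
  case (ctx u v a b)
  then show ?case by (simp add: cong_add_lcancel cong_add_rcancel)
next
  case (comm u v)
  then show ?case by (simp add: comm_bword_def)
next
  case power
  then show ?case by (simp add: cong_def)
qed simp_all

definition word_class :: "bword \<Rightarrow> bword set" where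
  "word_class a = {w. a \<doteq> w}"

lemma carrier_braid_quot_group:
  "carrier (braid_quot_group n m p) = word_class ` {w. valid_bword n w}"
  by (auto simp: braid_quot_group_def quotient_def Image_def word_class_def)

lemma mult_word_class:
  assumes "valid_bword n a" and "valid_bword n b"
  shows "monoid.mult (braid_quot_group n m p) (word_class a) (word_class b) = word_class (a @ b)"
proof -
  have "a @ b \<doteq> w" if "a \<doteq> a'" and "b \<doteq> b'" and "a' @ b' \<doteq> w" for a' b' w
    using braid_rel_append[OF that(1,2)] that(3) by (rule braid_rel.trans)
  moreover have "a \<doteq> a" and "b \<doteq> b"
    using assms by (auto intro: braid_rel.refl)
  ultimately show ?thesis
    by (auto simp: braid_quot_group_def word_class_def)
qed

lemma word_class_eq_iff:
  assumes "valid_bword n b"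
  shows "word_class a = word_class b \<longleftrightarrow> a \<doteq> b"
proof
  assume "word_class a = word_class b"
  moreover have "b \<in> word_class b"
    using assms by (simp add: word_class_def braid_rel.refl)
  ultimately have "b \<in> word_class a" by simp
  then show "a \<doteq> b" by (simp add: word_class_def)
next
  assume ab: "a \<doteq> b"
  show "word_class a = word_class b"
    using braid_rel.trans[OF ab] braid_rel.trans[OF braid_rel.sym[OF ab]]
    by (auto simp: word_class_def)
qed

end

locale braid_congruence_cyclic = braid_congruence +
  fixes k :: nat
  assumes p_eq: "p = m * k + 1"
    and two_le_n: "2 \<le> n"
begin

lemma sigma_power_rel_Nil: "1 \<le> i \<Longrightarrow> i \<le> n - 1 \<Longrightarrow> replicate p (i, False) \<doteq> []"
proof (induction i rule: nat_induct_at_least)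
  case base
  then show ?case by (rule braid_rel.power)
next
  case (Suc i)
  have "[(i, False), (i + 1, False)] @ [(i, False)] \<doteq> [(i + 1, False)] @ [(i, False), (i + 1, False)]"
    using braid_rel.braid3[of i n m p] Suc.hyps Suc.prems by simp
  from conjugate_rel_Nil[OF this] show ?case
    using Suc by simp
qed

lemma sigma_inverse_rel:
  assumes "1 \<le> i" and "i \<le> n - 1"
  shows "replicate (m * k) (i, False) \<doteq> [(i, True)]"
proof -
  have "replicate (m * k) (i, False) @ [(i, False)] \<doteq> []"
    using sigma_power_rel_Nil[OF assms] by (simp add: p_eq replicate_append_same)
  then have "replicate (m * k) (i, False) \<doteq> inv_bword [(i, False)]"
    using assms by (intro append_rel_Nil_imp_rel_inv_bword) auto
  then show ?thesis by simp
qed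

lemma sigma_commute:
  assumes "1 \<le> i" "i \<le> n - 1" "1 \<le> j" "j \<le> n - 1"
  shows "[(i, False), (j, False)] \<doteq> [(j, False), (i, False)]"
proof -
  let ?X = "replicate (m * k) (i, False)" and ?Y = "replicate (m * k) (j, False)"
  have concat_replicate: "concat (replicate k (replicate m x)) = replicate (m * k) x" for x :: "nat \<times> bool"
    by (induction k) (simp_all add: replicate_add)
  have "replicate m (i, False) @ replicate m (j, False) \<doteq> replicate m (j, False) @ replicate m (i, False)"
    using assms by (intro level_kernel_commute in_level_kernel_replicate) auto
  from commute_concat_replicate[OF _ this, of k]
  have "?X @ replicate m (j, False) \<doteq> replicate m (j, False) @ ?X"
    using assms by (simp add: concat_replicate)
  from commute_concat_replicate[OF _ braid_rel.sym[OF this], of k]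
  have XY: "?Y @ ?X \<doteq> ?X @ ?Y"
    using assms by (simp add: concat_replicate)
  have "[(j, True)] @ [(i, True)] \<doteq> ?Y @ ?X"
    using braid_rel_append[OF braid_rel.sym[OF sigma_inverse_rel[of j]] braid_rel.sym[OF sigma_inverse_rel[of i]]]
      assms by simp
  also note XY
  also have "?X @ ?Y \<doteq> [(i, True)] @ [(j, True)]"
    using braid_rel_append[OF sigma_inverse_rel[of i] sigma_inverse_rel[of j]] assms by simp
  finally have "inv_bword ([(j, True)] @ [(i, True)]) \<doteq> inv_bword ([(i, True)] @ [(j, True)])"
    by (rule braid_rel_inv_bword)
  then show ?thesis by simp
qed

lemma sigma_Suc_rel:
  assumes "1 \<le> i" and "i + 1 \<le> n - 1"
  shows "[(i + 1, False)] \<doteq> [(i, False)]"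
proof -
  let ?a = "(i, False)" and ?b = "(i + 1, False)"
  have valid: "valid_bword n [?a]" "valid_bword n [?b]" using assms by auto
  have ab: "[?a] @ [?b] \<doteq> [?b] @ [?a]"
    using sigma_commute assms by simp
  have "[?a] @ ([?a] @ [?b]) \<doteq> [?a] @ ([?b] @ [?a])"
    using braid_rel_append[OF braid_rel.refl[OF valid(1)] ab] .
  also have "\<dots> = [?a, ?b, ?a]" by simp
  also have "\<dots> \<doteq> [?b, ?a, ?b]"
    using assms by (intro braid_rel.braid3)
  also have "\<dots> = ([?b] @ [?a]) @ [?b]" by simp
  also have "\<dots> \<doteq> ([?a] @ [?b]) @ [?b]"
    using braid_rel_append[OF braid_rel.sym[OF ab] braid_rel.refl[OF valid(2)]] .
  also have "\<dots> = [?a] @ ([?b] @ [?b])" by simp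
  finally have "[?a] @ [?b] \<doteq> [?b] @ [?b]"
    by (rule braid_rel_cancel_left[OF valid(1)])
  then have "[?a] \<doteq> [?b]"
    by (rule braid_rel_cancel_right[OF valid(2)])
  then show ?thesis by (rule braid_rel.sym)
qed

lemma sigma_rel_sigma_one: "1 \<le> i \<Longrightarrow> i \<le> n - 1 \<Longrightarrow> [(i, False)] \<doteq> [(1, False)]"
proof (induction i rule: nat_induct_at_least)
  case base
  then show ?case by (simp add: braid_rel.refl)
next
  case (Suc i)
  have "[(Suc i, False)] \<doteq> [(i, False)]"
    using sigma_Suc_rel[of i] Suc by simp
  also have "\<dots> \<doteq> [(1, False)]"
    using Suc by simp
  finally show ?case .
qed

lemma valid_sigma_one_power [simp]: "valid_bword n (sigma_one_power j)"
  using two_le_n by (auto simp: sigma_one_power_def)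

lemma letter_rel_sigma_one_power:
  assumes "1 \<le> i" and "i \<le> n - 1"
  shows "[(i, b)] \<doteq> sigma_one_power (if b then m * k else 1)"
proof (cases b)
  case False
  then show ?thesis using sigma_rel_sigma_one[OF assms] by (simp add: sigma_one_power_def)
next
  case True
  have "inv_bword [(i, False)] \<doteq> inv_bword [(1, False)]"
    using sigma_rel_sigma_one[OF assms] by (rule braid_rel_inv_bword)
  also have "\<dots> \<doteq> replicate (m * k) (1, False)"
    using sigma_inverse_rel[of 1] two_le_n by (simp add: braid_rel.sym)
  finally show ?thesis using True by (simp add: sigma_one_power_def)
qed

lemma ex_rel_sigma_one_power: "valid_bword n w \<Longrightarrow> \<exists>j. w \<doteq> sigma_one_power j"
proof (induction w)
  case Nil
  have "[] \<doteq> sigma_one_power 0" by (simp add: braid_rel.refl)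
  then show ?case ..
next
  case (Cons x w)
  obtain i b where x: "x = (i, b)" by fastforce
  obtain j where "w \<doteq> sigma_one_power j"
    using Cons by auto
  then have "[(i, b)] @ w \<doteq> sigma_one_power (if b then m * k else 1) @ sigma_one_power j"
    using Cons.prems x by (intro braid_rel_append letter_rel_sigma_one_power) auto
  then show ?case
    using x by (auto simp: sigma_one_power_add[symmetric])
qed

lemma sigma_one_power_mod: "sigma_one_power j \<doteq> sigma_one_power (j mod p)"
proof -
  have period: "sigma_one_power (p * q) \<doteq> []" for q
  proof (induction q)
    case 0
    then show ?case by (simp add: braid_rel.refl)
  next
    case (Suc q)
    have "sigma_one_power p \<doteq> []"
      using braid_rel.power[of n m p] two_le_n by (simp add: sigma_one_power_def)
    from braid_rel_append[OF this Suc.IH] show ?case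
      by (simp add: sigma_one_power_add)
  qed
  have "sigma_one_power j = sigma_one_power (j mod p) @ sigma_one_power (p * (j div p))"
    by (simp add: sigma_one_power_add[symmetric])
  also have "\<dots> \<doteq> sigma_one_power (j mod p) @ []"
    by (intro braid_rel_append braid_rel.refl period valid_sigma_one_power)
  finally show ?thesis by simp
qed

lemma word_class_sigma_one_power_eq_iff:
  "word_class (sigma_one_power a) = word_class (sigma_one_power b) \<longleftrightarrow> [a = b] (mod p)"
proof
  assume "word_class (sigma_one_power a) = word_class (sigma_one_power b)"
  then have "sigma_one_power a \<doteq> sigma_one_power b"
    by (simp add: word_class_eq_iff)
  from exponent_sum_cong[OF this] show "[a = b] (mod p)"
    by (simp add: cong_int_iff)
next
  assume "[a = b] (mod p)"
  then have "sigma_one_power a \<doteq> sigma_one_power b"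
    using sigma_one_power_mod[of a] braid_rel.sym[OF sigma_one_power_mod[of b]]
    by (simp add: cong_def braid_rel.trans)
  then show "word_class (sigma_one_power a) = word_class (sigma_one_power b)"
    by (simp add: word_class_eq_iff)
qed

lemma rel_sigma_one_power_exponent_sum:
  assumes "valid_bword n w"
  shows "w \<doteq> sigma_one_power (nat (exponent_sum w mod int p))"
proof -
  obtain j where j: "w \<doteq> sigma_one_power j"
    using ex_rel_sigma_one_power[OF assms] by blast
  then have "exponent_sum w mod int p = int (j mod p)"
    using exponent_sum_cong[OF j] by (simp add: cong_def zmod_int)
  then show ?thesis
    using braid_rel.trans[OF j sigma_one_power_mod] by simp
qed

theorem integer_mod_group_iso_braid_quot_group: "integer_mod_group p \<cong> braid_quot_group n m p"
proof -
  let ?G = "braid_quot_group n m p" and ?Z = "integer_mod_group p"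
  define g where "g j = word_class (sigma_one_power (nat j))" for j :: int
  have p_pos: "0 < p"
    using p_eq by simp
  have carrier_Z: "carrier ?Z = {0..<int p}"
    using p_pos by (simp add: carrier_integer_mod_group)
  have g_carrier: "g j \<in> carrier ?G" for j
    by (auto simp: g_def carrier_braid_quot_group)
  have "g \<in> hom ?Z ?G"
  proof (rule homI)
    fix j l assume "j \<in> carrier ?Z" and "l \<in> carrier ?Z"
    then have "nat ((j + l) mod int p) = (nat j + nat l) mod p"
      by (simp add: carrier_Z nat_mod_distrib nat_add_distrib)
    then show "g (j \<otimes>\<^bsub>?Z\<^esub> l) = g j \<otimes>\<^bsub>?G\<^esub> g l"
      by (simp add: g_def mult_word_class
          word_class_sigma_one_power_eq_iff sigma_one_power_add[symmetric])
  qed (rule g_carrier)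
  moreover have "inj_on g (carrier ?Z)"
    by (rule inj_onI) (auto simp: g_def carrier_Z word_class_sigma_one_power_eq_iff cong_def)
  moreover have "g ` carrier ?Z = carrier ?G"
  proof (intro equalityI subsetI)
    fix C assume "C \<in> carrier ?G"
    then obtain w where w: "valid_bword n w" "C = word_class w"
      by (auto simp: carrier_braid_quot_group)
    have "C = g (exponent_sum w mod int p)"
      using rel_sigma_one_power_exponent_sum[OF w(1)] w
      by (simp add: g_def word_class_eq_iff)
    moreover have "exponent_sum w mod int p \<in> carrier ?Z"
      unfolding carrier_Z using p_pos by simp
    ultimately show "C \<in> g ` carrier ?Z" by blast
  qed (use g_carrier in auto)
  ultimately have "g \<in> iso ?Z ?G"
    by (simp add: iso_iff)
  then show ?thesis by (rule is_isoI)
qed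

end

theorem proposition3p1:
  fixes n m k :: nat
  assumes "n \<ge> 3" and "m \<ge> 2" and "k \<ge> 1"
  shows "finite (carrier (braid_quot_group n m (m * k + 1))) \<and>
         braid_quot_group n m (m * k + 1) \<cong> integer_mod_group (m * k + 1)"
proof -
  (* only n >= 2 is needed; the bounds on m and k are not *)
  interpret braid_congruence_cyclic n m "m * k + 1" k
    using assms by unfold_locales auto
  have "braid_quot_group n m (m * k + 1) \<cong> integer_mod_group (m * k + 1)"
    using group.iso_sym[OF group_integer_mod_group integer_mod_group_iso_braid_quot_group] .
  moreover have "finite (carrier (integer_mod_group (m * k + 1)))"
    by (simp add: carrier_integer_mod_group)
  ultimately show ?thesis
    using iso_finite by blast
qed

end
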